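(* Let $G$ be a $(2K_2, K_1+C_4)$-free graph. Then $\chi(G)\le \omega(G)+5$.
   Context: All graphs are finite, simple and undirected. $C_4$ is the cycle on 4 vertices; $2K_2$ is the disjoint union of two edges; $K_1+C_4$ is the graph obtained from $C_4$ by adding a vertex adjacent to all four of its vertices. A graph is $\mathcal F$-free if it has no induced subgraph isomorphic to a member of $\mathcal F$. $\chi$ is the chromatic number and $\omega$ the clique number. *)

theory Defs
  imports Main
begin

definition simple_graph :: "'a set \<Rightarrow> ('a \<Rightarrow> 'a \<Rightarrow> bool) \<Rightarrow> bool" where
  "simple_graph V E \<longleftrightarrow> finite V \<and> (\<forall>u v. E u v \<longrightarrow> u \<in> V \<and> v \<in> V)
     \<and> (\<forall>u v. E u v \<longrightarrow> E v u) \<and> (\<forall>v. \<not> E v v)"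

definition has_induced :: "'a set \<Rightarrow> ('a \<Rightarrow> 'a \<Rightarrow> bool) \<Rightarrow> 'b set \<Rightarrow> ('b \<Rightarrow> 'b \<Rightarrow> bool) \<Rightarrow> bool" where
  "has_induced V E W F \<longleftrightarrow> (\<exists>f. inj_on f W \<and> f ` W \<subseteq> V \<and>
      (\<forall>x\<in>W. \<forall>y\<in>W. E (f x) (f y) \<longleftrightarrow> F x y))"

definition twoK2_edges :: "nat \<Rightarrow> nat \<Rightarrow> bool" where
  "twoK2_edges x y \<longleftrightarrow> {x, y} = {0, 1} \<or> {x, y} = {2, 3}"

definition K1C4_edges :: "nat \<Rightarrow> nat \<Rightarrow> bool" where
  "K1C4_edges x y \<longleftrightarrow> {x, y} = {0, 1} \<or> {x, y} = {1, 2} \<or> {x, y} = {2, 3} \<or> {x, y} = {3, 0}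
     \<or> {x, y} = {4, 0} \<or> {x, y} = {4, 1} \<or> {x, y} = {4, 2} \<or> {x, y} = {4, 3}"

definition is_clique :: "'a set \<Rightarrow> ('a \<Rightarrow> 'a \<Rightarrow> bool) \<Rightarrow> 'a set \<Rightarrow> bool" where
  "is_clique V E K \<longleftrightarrow> K \<subseteq> V \<and> (\<forall>u\<in>K. \<forall>v\<in>K. u \<noteq> v \<longrightarrow> E u v)"

definition clique_number :: "'a set \<Rightarrow> ('a \<Rightarrow> 'a \<Rightarrow> bool) \<Rightarrow> nat" where
  "clique_number V E = Max {card K | K. is_clique V E K}"

definition proper_colouring :: "'a set \<Rightarrow> ('a \<Rightarrow> 'a \<Rightarrow> bool) \<Rightarrow> nat \<Rightarrow> ('a \<Rightarrow> nat) \<Rightarrow> bool" where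
  "proper_colouring V E k c \<longleftrightarrow> (\<forall>v\<in>V. c v < k) \<and> (\<forall>u\<in>V. \<forall>v\<in>V. E u v \<longrightarrow> c u \<noteq> c v)"

definition chromatic_number :: "'a set \<Rightarrow> ('a \<Rightarrow> 'a \<Rightarrow> bool) \<Rightarrow> nat" where
  "chromatic_number V E = (LEAST k. \<exists>c. proper_colouring V E k c)"

end

(*
  In a 2K_2-free graph, all vertices outside the neighbourhoods of the two ends of an edge
  form an independent set, so \<chi> \<le> 2k + 1 when every neighbourhood is k-colourable. This gives
  \<chi> \<le> 3 for \<omega> \<le> 2 and \<chi> \<le> 7 for \<omega> = 3 (neighbourhoods are then triangle-free).
  For \<omega> \<ge> 4 fix a maximum clique K. The vertices missing exactly one vertex x of K can share
  the colour of x, giving \<omega> colours on K and these vertices. The remaining vertices miss at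
  least two vertices of K; for two adjacent ones, 2K_2-freeness makes their sets of missed
  vertices meet in at most one vertex, and (K_1 + C_4)-freeness makes these sets cover K. Three
  pairwise adjacent such vertices would then force \<omega> \<le> 3, so they induce a triangle-free graph
  and need only 3 further colours.
*)

theory Submission
  imports Defs
begin

definition colourable :: "'a set \<Rightarrow> ('a \<Rightarrow> 'a \<Rightarrow> bool) \<Rightarrow> nat \<Rightarrow> bool" where
  "colourable W E k \<longleftrightarrow> (\<exists>c. proper_colouring W E k c)"

definition triangle_free :: "'a set \<Rightarrow> ('a \<Rightarrow> 'a \<Rightarrow> bool) \<Rightarrow> bool" where
  "triangle_free W E \<longleftrightarrow> \<not> (\<exists>a\<in>W. \<exists>b\<in>W. \<exists>c\<in>W. E a b \<and> E b c \<and> E a c)"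

lemma chromatic_number_le:
  assumes "colourable V E k"
  shows "chromatic_number V E \<le> k"
  using assms unfolding colourable_def chromatic_number_def by (blast intro: Least_le)

lemma colourable_Un:
  assumes "colourable A E a" and "colourable B E b"
  shows "colourable (A \<union> B) E (a + b)"
proof -
  obtain c1 c2 where c1: "proper_colouring A E a c1" and c2: "proper_colouring B E b c2"
    using assms unfolding colourable_def by blast
  have "proper_colouring (A \<union> B) E (a + b) (\<lambda>v. if v \<in> A then c1 v else a + c2 v)"
    unfolding proper_colouring_def
  proof (intro conjI ballI impI)
    fix u v assume "u \<in> A \<union> B" "v \<in> A \<union> B" "E u v"
    then show "(if u \<in> A then c1 u else a + c2 u) \<noteq> (if v \<in> A then c1 v else a + c2 v)"
      using c1 c2 unfolding proper_colouring_def by (cases "u \<in> A"; cases "v \<in> A"; force)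
  qed (use c1 c2 in \<open>auto simp: proper_colouring_def\<close>)
  then show ?thesis unfolding colourable_def by blast
qed

lemma colourable_mono:
  assumes "colourable A E k" and "B \<subseteq> A" and "k \<le> k'"
  shows "colourable B E k'"
proof -
  obtain c where "proper_colouring A E k c"
    using assms(1) unfolding colourable_def by blast
  then have "proper_colouring B E k' c"
    using assms(2,3) unfolding proper_colouring_def by (meson order_less_le_trans subsetD)
  then show ?thesis unfolding colourable_def by blast
qed

lemma colourable_1_if_independent:
  assumes "\<forall>u\<in>A. \<forall>v\<in>A. \<not> E u v"
  shows "colourable A E 1"
  using assms unfolding colourable_def proper_colouring_def by auto

locale finite_simple_graph =
  fixes V :: "'a set" and E :: "'a \<Rightarrow> 'a \<Rightarrow> bool"
  assumes simple: "simple_graph V E"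
begin

lemma finite_V: "finite V"
  and edge_sym: "E u v \<Longrightarrow> E v u"
  and edge_irrefl: "\<not> E v v"
  using simple unfolding simple_graph_def by blast+

lemma edge_neq: "E u v \<Longrightarrow> u \<noteq> v"
  using edge_irrefl by blast

lemma card_clique_le_clique_number:
  assumes "is_clique V E K"
  shows "card K \<le> clique_number V E"
proof -
  have "{card K | K. is_clique V E K} \<subseteq> {..card V}"
    using card_mono[OF finite_V] unfolding is_clique_def by auto
  then show ?thesis
    unfolding clique_number_def using assms by (blast intro: Max_ge finite_subset)
qed

lemma ex_max_clique: "\<exists>K. is_clique V E K \<and> card K = clique_number V E"
proof -
  let ?S = "{card K | K. is_clique V E K}"
  have "?S \<subseteq> {..card V}"
    using card_mono[OF finite_V] unfolding is_clique_def by auto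
  then have "finite ?S" by (rule finite_subset) simp
  moreover have "is_clique V E {}" unfolding is_clique_def by simp
  ultimately have "Max ?S \<in> ?S" by (intro Max_in) blast+
  then show ?thesis unfolding clique_number_def by auto
qed

lemma clique_number_ge_3_if_triangle:
  assumes "a \<in> V" "b \<in> V" "c \<in> V" "E a b" "E b c" "E a c"
  shows "3 \<le> clique_number V E"
proof -
  have "is_clique V E {a, b, c}"
    using assms edge_sym unfolding is_clique_def by auto
  moreover have "a \<noteq> b" "b \<noteq> c" "a \<noteq> c"
    using assms(4-6) edge_neq by blast+
  then have "card {a, b, c} = 3" by simp
  ultimately show ?thesis using card_clique_le_clique_number by metis
qed

lemma clique_number_ge_4_if_triangle_in_nbhd:
  assumes "z \<in> V" "a \<in> V" "b \<in> V" "c \<in> V" "E a b" "E b c" "E a c" "E z a" "E z b" "E z c"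
  shows "4 \<le> clique_number V E"
proof -
  have "is_clique V E {z, a, b, c}"
    using assms edge_sym unfolding is_clique_def by auto
  moreover have "a \<noteq> b" "b \<noteq> c" "a \<noteq> c" "z \<noteq> a" "z \<noteq> b" "z \<noteq> c"
    using assms(5-10) edge_neq by blast+
  then have "card {z, a, b, c} = 4" by simp
  ultimately show ?thesis using card_clique_le_clique_number by metis
qed

lemma triangle_free_if_clique_number_le_2:
  assumes "clique_number V E \<le> 2"
  shows "triangle_free V E"
  unfolding triangle_free_def
proof clarify
  fix a b c assume "a \<in> V" "b \<in> V" "c \<in> V" "E a b" "E b c" "E a c"
  then have "3 \<le> clique_number V E" by (rule clique_number_ge_3_if_triangle)
  with assms show False by simp
qed

lemma triangle_free_nbhd_if_clique_number_le_3:
  assumes "clique_number V E \<le> 3" and "z \<in> V"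
  shows "triangle_free {u \<in> V. E z u} E"
  unfolding triangle_free_def
proof clarify
  fix a b c assume "a \<in> V" "b \<in> V" "c \<in> V" "E a b" "E b c" "E a c" "E z a" "E z b" "E z c"
  then have "4 \<le> clique_number V E"
    using assms(2) by (intro clique_number_ge_4_if_triangle_in_nbhd)
  with assms(1) show False by simp
qed

lemma has_induced_twoK2I:
  assumes "a \<in> V" "b \<in> V" "c \<in> V" "d \<in> V"
    and "E a b" "E c d" "\<not> E a c" "\<not> E a d" "\<not> E b c" "\<not> E b d"
  shows "has_induced V E {0::nat..3} twoK2_edges"
proof -
  define f where "f i = (if i = 0 then a else if i = 1 then b else if i = 2 then c else d)"
    for i :: nat
  have dom: "{0::nat..3} = {0, 1, 2, 3}" by auto
  have "a \<noteq> b" "a \<noteq> c" "a \<noteq> d" "b \<noteq> c" "b \<noteq> d" "c \<noteq> d"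
    using assms edge_neq edge_sym by metis+
  then have "inj_on f {0::nat..3}"
    unfolding dom f_def inj_on_def by auto
  moreover have "f ` {0::nat..3} \<subseteq> V"
    unfolding dom f_def using assms by auto
  moreover have "\<forall>x\<in>{0::nat..3}. \<forall>y\<in>{0..3}. E (f x) (f y) \<longleftrightarrow> twoK2_edges x y"
  proof -
    have "E b a" "E d c" "\<not> E c a" "\<not> E d a" "\<not> E c b" "\<not> E d b"
      using assms edge_sym by blast+
    then show ?thesis
      using assms(5-10) unfolding dom f_def twoK2_edges_def by (simp add: doubleton_eq_iff edge_irrefl)
  qed
  ultimately show ?thesis unfolding has_induced_def by blast
qed

lemma has_induced_K1C4I:
  assumes "a \<in> V" "b \<in> V" "c \<in> V" "d \<in> V" "h \<in> V"
    and "E a b" "E b c" "E c d" "E d a" "E h a" "E h b" "E h c" "E h d"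
    and "\<not> E a c" "\<not> E b d" "a \<noteq> c" "b \<noteq> d"
  shows "has_induced V E {0::nat..4} K1C4_edges"
proof -
  define f where
    "f i = (if i = 0 then a else if i = 1 then b else if i = 2 then c else if i = 3 then d else h)"
    for i :: nat
  have dom: "{0::nat..4} = {0, 1, 2, 3, 4}" by auto
  have "a \<noteq> b" "a \<noteq> d" "a \<noteq> h" "b \<noteq> c" "b \<noteq> h" "c \<noteq> d" "c \<noteq> h" "d \<noteq> h"
    using assms edge_neq edge_sym by metis+
  then have "inj_on f {0::nat..4}"
    unfolding dom f_def inj_on_def using assms by auto
  moreover have "f ` {0::nat..4} \<subseteq> V"
    unfolding dom f_def using assms by auto
  moreover have "\<forall>x\<in>{0::nat..4}. \<forall>y\<in>{0..4}. E (f x) (f y) \<longleftrightarrow> K1C4_edges x y"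
  proof -
    have "E b a" "E c b" "E d c" "E a d" "E a h" "E b h" "E c h" "E d h" "\<not> E c a" "\<not> E d b"
      using assms edge_sym by blast+
    then show ?thesis
      using assms(6-15) unfolding dom f_def K1C4_edges_def by (simp add: doubleton_eq_iff edge_irrefl)
  qed
  ultimately show ?thesis unfolding has_induced_def by blast
qed

end

locale twoK2_free_graph = finite_simple_graph +
  assumes twoK2_free: "\<not> has_induced V E {0::nat..3} twoK2_edges"
begin

text \<open>Every vertex of W outside both neighbourhoods of the edge xy is adjacent to neither
  end, so two such vertices cannot be adjacent without forming an induced 2K_2 with xy.\<close>

lemma colourable_by_edge_nbhds:
  assumes W: "W \<subseteq> V" and xy: "x \<in> W" "y \<in> W" "E x y"
    and "colourable {z \<in> W. E x z} E a" and "colourable {z \<in> W. E y z} E b"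
  shows "colourable W E (a + b + 1)"
proof -
  let ?C = "W - {z. E x z} - {z. E y z}"
  have "\<not> E u v" if "u \<in> ?C" "v \<in> ?C" for u v
  proof
    assume "E u v"
    with that xy W edge_sym have "has_induced V E {0::nat..3} twoK2_edges"
      by (intro has_induced_twoK2I[of u v x y]) blast+
    with twoK2_free show False ..
  qed
  then have "colourable ?C E 1"
    by (blast intro: colourable_1_if_independent)
  moreover have "W = ({z \<in> W. E x z} \<union> {z \<in> W. E y z}) \<union> ?C" by blast
  ultimately show ?thesis
    using assms(5,6) by (metis colourable_Un)
qed

lemma colourable_if_nbhds_colourable:
  assumes "W \<subseteq> V" and "\<And>z. z \<in> W \<Longrightarrow> colourable {u \<in> W. E z u} E k"
  shows "colourable W E (2 * k + 1)"
proof (cases "\<exists>x\<in>W. \<exists>y\<in>W. E x y")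
  case True
  then obtain x y where "x \<in> W" "y \<in> W" "E x y" by blast
  with assms have "colourable W E (k + k + 1)"
    by (intro colourable_by_edge_nbhds) auto
  then show ?thesis by (simp add: mult_2)
next
  case False
  then have "colourable W E 1" by (blast intro: colourable_1_if_independent)
  then show ?thesis by (rule colourable_mono) auto
qed

lemma colourable_3_if_triangle_free:
  assumes "W \<subseteq> V" and "triangle_free W E"
  shows "colourable W E 3"
proof -
  have "colourable {u \<in> W. E z u} E 1" if "z \<in> W" for z
    using assms(2) that edge_sym unfolding triangle_free_def
    by (intro colourable_1_if_independent) blast
  then show ?thesis
    using colourable_if_nbhds_colourable[OF assms(1)] by fastforce
qed

lemma colourable_7_if_clique_number_le_3:
  assumes "clique_number V E \<le> 3"
  shows "colourable V E 7"
proof -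
  have "colourable {u \<in> V. E z u} E 3" if "z \<in> V" for z
    using assms that
    by (intro colourable_3_if_triangle_free triangle_free_nbhd_if_clique_number_le_3) auto
  then show ?thesis
    using colourable_if_nbhds_colourable[of V 3] by simp
qed

end

locale max_clique = finite_simple_graph +
  fixes K :: "'a set"
  assumes K_clique: "is_clique V E K"
    and card_K: "card K = clique_number V E"
begin

definition non_nbrs :: "'a \<Rightarrow> 'a set" where
  "non_nbrs u = {k \<in> K. \<not> E u k}"

lemma K_subset: "K \<subseteq> V"
  and K_edge: "a \<in> K \<Longrightarrow> b \<in> K \<Longrightarrow> a \<noteq> b \<Longrightarrow> E a b"
  using K_clique unfolding is_clique_def by auto

lemma finite_K: "finite K"
  using K_subset finite_V by (rule finite_subset)

lemma non_nbrs_subset: "non_nbrs u \<subseteq> K"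
  unfolding non_nbrs_def by blast

lemma finite_non_nbrs: "finite (non_nbrs u)"
  using finite_K non_nbrs_subset by (rule finite_subset[rotated])

lemma card_Diff_non_nbrs: "card (K - non_nbrs u) + card (non_nbrs u) = clique_number V E"
  using card_Diff_subset[OF finite_non_nbrs non_nbrs_subset] card_mono[OF finite_K non_nbrs_subset]
    card_K by simp

lemma non_nbrs_nonempty:
  assumes "u \<in> V - K"
  shows "non_nbrs u \<noteq> {}"
proof
  assume "non_nbrs u = {}"
  then have "is_clique V E (insert u K)"
    using K_clique assms edge_sym unfolding is_clique_def non_nbrs_def by auto
  moreover have "card (insert u K) = clique_number V E + 1"
    using assms finite_K card_K by simp
  ultimately show False
    using card_clique_le_clique_number by fastforce
qed

lemma adjacent_not_same_single_non_nbr: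
  assumes "u \<in> V - K" "v \<in> V - K" "E u v"
    and "non_nbrs u = {x}" "non_nbrs v = {x}"
  shows False
proof -
  let ?K' = "insert u (insert v (K - {x}))"
  have x: "x \<in> K" using assms(4) non_nbrs_subset by blast
  have "is_clique V E ?K'"
    unfolding is_clique_def
  proof (intro conjI ballI impI)
    show "?K' \<subseteq> V" using assms(1,2) K_subset by blast
  next
    fix a b assume "a \<in> ?K'" "b \<in> ?K'" "a \<noteq> b"
    then show "E a b"
      using assms(3-5) edge_sym K_edge unfolding non_nbrs_def by blast
  qed
  moreover have "card ?K' = clique_number V E + 1"
  proof -
    have "card K > 0" using x finite_K card_gt_0_iff by blast
    then show ?thesis using assms(1-3) x finite_K card_K edge_neq by simp
  qed
  ultimately show False
    using card_clique_le_clique_number by fastforce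
qed

text \<open>A vertex missing exactly one vertex x of K takes the colour of x; two adjacent such
  vertices miss different vertices, as otherwise they would extend K - {x} to a clique larger
  than K.\<close>

lemma colourable_K_Un_single_non_nbr:
  "colourable (K \<union> {u \<in> V - K. card (non_nbrs u) = 1}) E (clique_number V E)"
proof -
  let ?T = "{u \<in> V - K. card (non_nbrs u) = 1}"
  define anchor where "anchor v = (if v \<in> K then v else the_elem (non_nbrs v))" for v
  obtain h where h: "bij_betw h K {0..<clique_number V E}"
    using ex_bij_betw_finite_nat[OF finite_K] card_K by auto
  have single: "non_nbrs v = {anchor v}" if "v \<in> ?T" for v
  proof -
    have "card (non_nbrs v) = 1" using that by simp
    then obtain x where "non_nbrs v = {x}" by (rule card_1_singletonE)
    then show ?thesis using that unfolding anchor_def by simp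
  qed
  have anchor_in_K: "anchor v \<in> K" if "v \<in> K \<union> ?T" for v
  proof (cases "v \<in> K")
    case False
    then have "non_nbrs v = {anchor v}" using that single by blast
    then show ?thesis using non_nbrs_subset by blast
  qed (simp add: anchor_def)
  have anchor_K: "anchor v = v" if "v \<in> K" for v
    using that unfolding anchor_def by simp
  have anchor_neq: "anchor u \<noteq> anchor v" if "u \<in> K \<union> ?T" "v \<in> K \<union> ?T" "E u v" for u v
    using that(1,2)
  proof (elim UnE)
    assume "u \<in> K" "v \<in> K"
    then show ?thesis using that(3) edge_neq anchor_K by simp
  next
    assume "u \<in> K" "v \<in> ?T"
    have "u \<notin> non_nbrs v"
      using that(3) edge_sym unfolding non_nbrs_def by blast
    then show ?thesis
      unfolding anchor_K[OF \<open>u \<in> K\<close>] single[OF \<open>v \<in> ?T\<close>] by blast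
  next
    assume "u \<in> ?T" "v \<in> K"
    have "v \<notin> non_nbrs u"
      using that(3) unfolding non_nbrs_def by blast
    then show ?thesis
      unfolding anchor_K[OF \<open>v \<in> K\<close>] single[OF \<open>u \<in> ?T\<close>] by blast
  next
    assume "u \<in> ?T" "v \<in> ?T"
    show ?thesis
    proof
      assume "anchor u = anchor v"
      then have "non_nbrs v = {anchor u}"
        using single[OF \<open>v \<in> ?T\<close>] by simp
      moreover have "non_nbrs u = {anchor u}"
        using single[OF \<open>u \<in> ?T\<close>] .
      ultimately show False
        using adjacent_not_same_single_non_nbr[of u v "anchor u"] \<open>u \<in> ?T\<close> \<open>v \<in> ?T\<close> that(3)
        by blast
    qed
  qed
  have h_less: "h k < clique_number V E" if "k \<in> K" for k
    using bij_betw_apply[OF h that] by simp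
  have h_inj: "inj_on h K"
    using h by (rule bij_betw_imp_inj_on)
  have "proper_colouring (K \<union> ?T) E (clique_number V E) (h \<circ> anchor)"
    unfolding proper_colouring_def
  proof (intro conjI ballI impI)
    fix v assume "v \<in> K \<union> ?T"
    then show "(h \<circ> anchor) v < clique_number V E"
      using h_less anchor_in_K by simp
  next
    fix u v assume "u \<in> K \<union> ?T" "v \<in> K \<union> ?T" "E u v"
    then show "(h \<circ> anchor) u \<noteq> (h \<circ> anchor) v"
      using anchor_neq anchor_in_K inj_on_eq_iff[OF h_inj] by simp
  qed
  then show ?thesis unfolding colourable_def by blast
qed

end

locale twoK2_K1C4_free_max_clique = max_clique + twoK2_free_graph +
  assumes K1C4_free: "\<not> has_induced V E {0::nat..4} K1C4_edges"
begin

lemma card_non_nbrs_Int_le_1: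
  assumes "u \<in> V - K" "v \<in> V - K" "E u v"
  shows "card (non_nbrs u \<inter> non_nbrs v) \<le> 1"
proof (rule ccontr)
  assume "\<not> ?thesis"
  moreover have "finite (non_nbrs u \<inter> non_nbrs v)"
    using finite_non_nbrs by blast
  ultimately obtain a b
    where "a \<in> non_nbrs u \<inter> non_nbrs v" "b \<in> non_nbrs u \<inter> non_nbrs v" "a \<noteq> b"
    using card_le_Suc0_iff_eq by (metis One_nat_def)
  then have "has_induced V E {0::nat..3} twoK2_edges"
    using assms K_subset K_edge unfolding non_nbrs_def
    by (intro has_induced_twoK2I[of u v a b]) auto
  with twoK2_free show False ..
qed

text \<open>If some k in K were adjacent to both u and v, then u and v, together with a
  non-neighbour of v in K adjacent to u and a non-neighbour of u in K adjacent to v, would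
  form a C_4 with hub k.\<close>

lemma non_nbrs_Un_eq:
  assumes u: "u \<in> V - K" and v: "v \<in> V - K" and uv: "E u v"
    and "2 \<le> card (non_nbrs u)" "2 \<le> card (non_nbrs v)"
  shows "non_nbrs u \<union> non_nbrs v = K"
proof (rule ccontr)
  assume "non_nbrs u \<union> non_nbrs v \<noteq> K"
  then obtain k where k: "k \<in> K" "E u k" "E v k"
    using non_nbrs_subset unfolding non_nbrs_def by blast
  have Int_le: "card (non_nbrs u \<inter> non_nbrs v) \<le> 1"
    using card_non_nbrs_Int_le_1[OF u v uv] .
  have "\<not> non_nbrs v \<subseteq> non_nbrs u"
  proof
    assume "non_nbrs v \<subseteq> non_nbrs u"
    then have "non_nbrs u \<inter> non_nbrs v = non_nbrs v" by blast
    with Int_le assms(5) show False by simp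
  qed
  then obtain b where b: "b \<in> K" "E u b" "\<not> E v b"
    unfolding non_nbrs_def by blast
  have "\<not> non_nbrs u \<subseteq> non_nbrs v"
  proof
    assume "non_nbrs u \<subseteq> non_nbrs v"
    then have "non_nbrs u \<inter> non_nbrs v = non_nbrs u" by blast
    with Int_le assms(4) show False by simp
  qed
  then obtain c where c: "c \<in> K" "E v c" "\<not> E u c"
    unfolding non_nbrs_def by blast
  have "has_induced V E {0::nat..4} K1C4_edges"
  proof (rule has_induced_K1C4I[of u b c v k])
    show "u \<in> V" "b \<in> V" "c \<in> V" "v \<in> V" "k \<in> V"
      using u v b c k K_subset by auto
    show "E u b" "\<not> E u c" "E v u" "E k u" "E k v" "E c v" "\<not> E b v"
      using b c k uv edge_sym by blast+
    show "E b c" "E k b" "E k c"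
      using b c k K_edge by metis+
    show "u \<noteq> c" "b \<noteq> v"
      using u v b c by auto
  qed
  with K1C4_free show False ..
qed

lemma card_non_nbrs_add_le:
  assumes "u \<in> V - K" "v \<in> V - K" "E u v"
    and "2 \<le> card (non_nbrs u)" "2 \<le> card (non_nbrs v)"
  shows "card (non_nbrs u) + card (non_nbrs v) \<le> clique_number V E + 1"
  using card_Un_Int[OF finite_non_nbrs finite_non_nbrs, of u v]
    non_nbrs_Un_eq[OF assms] card_non_nbrs_Int_le_1[OF assms(1-3)] card_K
  by simp

text \<open>In a triangle abc of vertices missing at least two vertices of K, the sets K - non_nbrs x
  are pairwise disjoint, so the three non-neighbourhoods have total size at least 2 \<omega>; but any
  two of them have total size at most \<omega> + 1, which forces \<omega> \<le> 3.\<close>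

lemma triangle_free_many_non_nbrs:
  assumes "4 \<le> clique_number V E"
  shows "triangle_free {u \<in> V - K. 2 \<le> card (non_nbrs u)} E"
  unfolding triangle_free_def
proof (intro notI, elim bexE conjE)
  let ?R = "{u \<in> V - K. 2 \<le> card (non_nbrs u)}"
  let ?C = "\<lambda>x. K - non_nbrs x"
  fix a b c assume abc: "a \<in> ?R" "b \<in> ?R" "c \<in> ?R" "E a b" "E b c" "E a c"
  have sum_le: "card (non_nbrs x) + card (non_nbrs y) \<le> clique_number V E + 1"
    if "x \<in> ?R" "y \<in> ?R" "E x y" for x y
    using that by (intro card_non_nbrs_add_le) auto
  have disj: "?C x \<inter> ?C y = {}" if "x \<in> ?R" "y \<in> ?R" "E x y" for x y
  proof -
    have "non_nbrs x \<union> non_nbrs y = K"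
      using that by (intro non_nbrs_Un_eq) auto
    then show ?thesis by blast
  qed
  have "card (?C a \<union> ?C b \<union> ?C c) = card (?C a) + card (?C b) + card (?C c)"
    using disj[of a b] disj[of b c] disj[of a c] abc finite_K
    by (simp add: card_Un_disjoint Int_Un_distrib2)
  moreover have "card (?C a \<union> ?C b \<union> ?C c) \<le> clique_number V E"
    using card_mono[OF finite_K] card_K by (metis Diff_subset Un_least)
  ultimately show False
    using card_Diff_non_nbrs[of a] card_Diff_non_nbrs[of b] card_Diff_non_nbrs[of c]
      sum_le[of a b] sum_le[of b c] sum_le[of a c] abc assms
    by linarith
qed

lemma colourable_clique_number_add_3:
  assumes "4 \<le> clique_number V E"
  shows "colourable V E (clique_number V E + 3)"
proof -
  let ?T = "{u \<in> V - K. card (non_nbrs u) = 1}"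
  let ?R = "{u \<in> V - K. 2 \<le> card (non_nbrs u)}"
  have "V \<subseteq> (K \<union> ?T) \<union> ?R"
  proof
    fix u assume "u \<in> V"
    show "u \<in> (K \<union> ?T) \<union> ?R"
    proof (cases "u \<in> K")
      case False
      with \<open>u \<in> V\<close> have "card (non_nbrs u) \<noteq> 0"
        using non_nbrs_nonempty finite_non_nbrs by simp
      with \<open>u \<in> V\<close> False show ?thesis by auto
    qed simp
  qed
  then have V_eq: "V = (K \<union> ?T) \<union> ?R"
    using K_subset by blast
  have "colourable ?R E 3"
    using triangle_free_many_non_nbrs[OF assms] by (intro colourable_3_if_triangle_free) auto
  with colourable_K_Un_single_non_nbr have "colourable ((K \<union> ?T) \<union> ?R) E (clique_number V E + 3)"
    by (rule colourable_Un)
  with V_eq show ?thesis by simp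
qed

end

theorem corollary3p4:
  fixes V :: "'a set" and E :: "'a \<Rightarrow> 'a \<Rightarrow> bool"
  assumes "simple_graph V E"
    and "\<not> has_induced V E {0::nat..3} twoK2_edges"
    and "\<not> has_induced V E {0::nat..4} K1C4_edges"
  shows "chromatic_number V E \<le> clique_number V E + 5"
proof -
  interpret twoK2_free_graph V E
    using assms(1,2) by unfold_locales
  consider "clique_number V E \<le> 2" | "clique_number V E = 3" | "4 \<le> clique_number V E"
    by linarith
  then have "colourable V E (clique_number V E + 5)"
  proof cases
    case 1
    then have "colourable V E 3"
      by (intro colourable_3_if_triangle_free triangle_free_if_clique_number_le_2) auto
    then show ?thesis by (rule colourable_mono) auto
  next
    case 2
    then have "colourable V E 7" by (intro colourable_7_if_clique_number_le_3) simp
    then show ?thesis by (rule colourable_mono) (use 2 in auto)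
  next
    case 3
    obtain K where "is_clique V E K" "card K = clique_number V E"
      using ex_max_clique by blast
    then interpret twoK2_K1C4_free_max_clique V E K
      using assms by unfold_locales
    from 3 have "colourable V E (clique_number V E + 3)"
      by (rule colourable_clique_number_add_3)
    then show ?thesis by (rule colourable_mono) auto
  qed
  then show ?thesis by (rule chromatic_number_le)
qed

end
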